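(* Let $L$ be a binary $\mathbb{Z}_2$-lattice such that $\mathfrak{s}L = \mathbb{Z}_2$ and $\mathbb{Q}_2L$ is a hyperbolic plane. Let $s$ and $t$ be integers such that $t > 2s = \operatorname{ord}_2 dL$. Let $z$ be a primitive vector in $L$ with $\operatorname{ord}_2 Q(z) = t+1$, and let $w\in L$ satisfy $\operatorname{ord}_2 B(z,w) = t$. Then $\operatorname{ord}_2 Q(w)\ge t+2$.
   Context: A $\mathbb{Z}_2$-lattice is a finitely generated $\mathbb{Z}_2$-submodule of a quadratic space $(V,B)$ over $\mathbb{Q}_2$ with $Q(v)=B(v,v)$, assumed integral and nondegenerate. $\mathfrak{s}L=B(L,L)$ is the scale, $\mathbb{Q}_2L$ the space spanned by $L$, and $dL$ the determinant of a Gram matrix of $L$ (well defined up to unit squares). A vector $z$ is primitive if $\mathbb{Z}_2z$ is a direct summand of $L$. $\operatorname{ord}_2$ is the $2$-adic valuation (with $\operatorname{ord}_2 0=\infty$). *)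

theory Defs
  imports Main "HOL-Library.Extended_Nat"
begin

text \<open>An element of Z_2 is represented by the coherent sequence of its residues
  x mod 2^n, n = 0,1,2,... (the inverse limit of Z/2^nZ).\<close>

typedef z2 = "{f :: nat \<Rightarrow> int. \<forall>n. 0 \<le> f n \<and> f n < 2^n \<and> f (Suc n) mod 2^n = f n}"
  by (rule exI[of _ "\<lambda>_. 0"]) simp

lemma z2_coh_aux:
  fixes f g :: "nat \<Rightarrow> int"
  assumes "\<forall>n. f (Suc n) mod 2^n = f n" "\<forall>n. g (Suc n) mod 2^n = g n"
  shows "((f (Suc n) + g (Suc n)) mod 2^Suc n) mod 2^n = (f n + g n) mod 2^n"
    and "((f (Suc n) - g (Suc n)) mod 2^Suc n) mod 2^n = (f n - g n) mod 2^n"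
    and "((f (Suc n) * g (Suc n)) mod 2^Suc n) mod 2^n = (f n * g n) mod 2^n"
proof -
  have d: "(2::int)^n dvd 2^Suc n" by simp
  show "((f (Suc n) + g (Suc n)) mod 2^Suc n) mod 2^n = (f n + g n) mod 2^n"
    using assms by (simp only: mod_mod_cancel[OF d]) (metis mod_add_eq)
  show "((f (Suc n) - g (Suc n)) mod 2^Suc n) mod 2^n = (f n - g n) mod 2^n"
    using assms by (simp only: mod_mod_cancel[OF d]) (metis mod_diff_eq)
  show "((f (Suc n) * g (Suc n)) mod 2^Suc n) mod 2^n = (f n * g n) mod 2^n"
    using assms by (simp only: mod_mod_cancel[OF d]) (metis mod_mult_eq)
qed

setup_lifting type_definition_z2

lift_definition z2_zero :: z2 is "\<lambda>_. 0" by simp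

lift_definition z2_add :: "z2 \<Rightarrow> z2 \<Rightarrow> z2" (infixl "\<oplus>" 65)
  is "\<lambda>f g n. (f n + g n) mod 2^n"
  using z2_coh_aux(1) by simp

lift_definition z2_sub :: "z2 \<Rightarrow> z2 \<Rightarrow> z2" (infixl "\<ominus>" 65)
  is "\<lambda>f g n. (f n - g n) mod 2^n"
  using z2_coh_aux(2) by simp

lift_definition z2_mult :: "z2 \<Rightarrow> z2 \<Rightarrow> z2" (infixl "\<otimes>" 70)
  is "\<lambda>f g n. (f n * g n) mod 2^n"
  using z2_coh_aux(3) by simp

text \<open>2-adic valuation: ord2 x = k iff x \<equiv> 0 mod 2^k but not mod 2^(k+1); ord2 0 = \<infinity>.\<close>
lift_definition ord2 :: "z2 \<Rightarrow> enat"
  is "\<lambda>f. if (\<forall>n. f n = 0) then \<infinity> else enat (LEAST n. f (Suc n) \<noteq> 0)" .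

text \<open>A binary Z_2-lattice L is free of rank 2; we identify L with Z_2 \<times> Z_2 via a basis
  e1, e2, with Gram matrix [[a, b], [b, c]], i.e. B(e1,e1) = a, B(e1,e2) = b, B(e2,e2) = c.\<close>

definition bil :: "z2 \<Rightarrow> z2 \<Rightarrow> z2 \<Rightarrow> z2 \<times> z2 \<Rightarrow> z2 \<times> z2 \<Rightarrow> z2" where
  "bil a b c u v =
     a \<otimes> fst u \<otimes> fst v \<oplus> b \<otimes> (fst u \<otimes> snd v \<oplus> snd u \<otimes> fst v) \<oplus> c \<otimes> snd u \<otimes> snd v"

definition quadf :: "z2 \<Rightarrow> z2 \<Rightarrow> z2 \<Rightarrow> z2 \<times> z2 \<Rightarrow> z2" where
  "quadf a b c v = bil a b c v v"

definition gram_det :: "z2 \<Rightarrow> z2 \<Rightarrow> z2 \<Rightarrow> z2" where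
  "gram_det a b c = a \<otimes> c \<ominus> b \<otimes> b"

text \<open>sL = B(L,L) = Z_2 : some value B(x,y) is a unit (B is integral by construction).\<close>
definition scale_is_Z2 :: "z2 \<Rightarrow> z2 \<Rightarrow> z2 \<Rightarrow> bool" where
  "scale_is_Z2 a b c \<longleftrightarrow> (\<exists>x y. ord2 (bil a b c x y) = 0)"

text \<open>Q_2 L is a hyperbolic plane: the binary space is nondegenerate and isotropic.
  A nonzero isotropic vector of Q_2 L may be scaled into L, so we quantify over L.\<close>
definition hyperbolic_plane :: "z2 \<Rightarrow> z2 \<Rightarrow> z2 \<Rightarrow> bool" where
  "hyperbolic_plane a b c \<longleftrightarrow> gram_det a b c \<noteq> z2_zero \<and>
     (\<exists>v. v \<noteq> (z2_zero, z2_zero) \<and> quadf a b c v = z2_zero)"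

text \<open>z primitive: Z_2 z is a direct summand of L = Z_2^2, i.e. z extends to a basis (z, y).\<close>
definition primitive :: "z2 \<times> z2 \<Rightarrow> bool" where
  "primitive z \<longleftrightarrow> (\<exists>y. ord2 (fst z \<otimes> snd y \<ominus> snd z \<otimes> fst y) = 0)"

end

theory Submission
  imports Defs
begin

text \<open>Write [u, v] = \<open>det2 u v\<close> for the determinant of the coordinates of u and v,
  and d = dL. Everything rests on the identity Q(u) Q(v) - B(u, v)^2 = [u, v]^2 d. Completing
  the primitive z to a basis (z, y), it shows ord B(z, y) = s, and then Cramer's rule
  [z, y] B(z, w) = [w, y] Q(z) + [z, w] B(z, y) shows ord [z, w] = t - s. For an isotropic v
  and any x with [v, x] \<noteq> 0 the identity reads B(v, x)^2 = -[v, x]^2 d, so that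
  [v, x]^2 Q(z) Q(w) = ([v, x] B(z, w))^2 - ([z, w] B(v, x))^2 is a difference of two squares of
  the same order m = ord [v, x] + t. Odd squares are 1 mod 8, so this difference has order at
  least 2m + 3, which leaves ord Q(w) \<ge> t + 2.\<close>

lemma Rep_z2_nonneg: "0 \<le> Rep_z2 x n"
  using Rep_z2[of x] by auto

lemma Rep_z2_less: "Rep_z2 x n < 2^n"
  using Rep_z2[of x] by auto

lemma Rep_z2_Suc_mod: "Rep_z2 x (Suc n) mod 2^n = Rep_z2 x n"
  using Rep_z2[of x] by auto

lemma Rep_z2_mod [simp]: "Rep_z2 x n mod 2^n = Rep_z2 x n"
  using Rep_z2_nonneg Rep_z2_less by (simp add: mod_pos_pos_trivial)

lemma Rep_z2_at_0 [simp]: "Rep_z2 x 0 = 0"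
  using Rep_z2_nonneg[of x 0] Rep_z2_less[of x 0] by simp

lemma z2_eq_iff: "x = y \<longleftrightarrow> (\<forall>n. Rep_z2 x n = Rep_z2 y n)"
  by (metis Rep_z2_inject ext)

lemma Rep_z2_mod_pow:
  assumes "m \<le> n"
  shows "Rep_z2 x n mod 2^m = Rep_z2 x m"
  using assms
proof (induction n)
  case (Suc n)
  show ?case
  proof (cases "m = Suc n")
    case False
    with Suc.prems have "m \<le> n" by simp
    then have "(2::int)^m dvd 2^n" by (simp add: le_imp_power_dvd)
    then have "Rep_z2 x (Suc n) mod 2^m = (Rep_z2 x (Suc n) mod 2^n) mod 2^m"
      by (simp add: mod_mod_cancel)
    then show ?thesis using Rep_z2_Suc_mod Suc.IH \<open>m \<le> n\<close> by simp
  qed (metis Rep_z2_mod)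
qed simp

lift_definition z2_one :: z2 is "\<lambda>n. 1 mod 2^n"
proof -
  fix n :: nat
  have "(2::int)^n dvd 2^Suc n" by simp
  then show "0 \<le> (1::int) mod 2^n \<and> 1 mod 2^n < (2::int)^n \<and> 1 mod 2^Suc n mod 2^n = (1::int) mod 2^n"
    by (simp add: mod_mod_cancel)
qed

instantiation z2 :: comm_ring_1
begin

definition "0 = z2_zero"
definition "1 = z2_one"
definition "(+) = z2_add"
definition "(-) = z2_sub"
definition "(*) = z2_mult"
definition "- x = z2_sub z2_zero x"

lemma Rep_z2_zero [simp]: "Rep_z2 0 n = 0"
  by (simp add: zero_z2_def z2_zero.rep_eq)

lemma Rep_z2_one [simp]: "Rep_z2 1 n = 1 mod 2^n"
  by (simp add: one_z2_def z2_one.rep_eq)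

lemma Rep_z2_plus [simp]: "Rep_z2 (x + y) n = (Rep_z2 x n + Rep_z2 y n) mod 2^n"
  by (simp add: plus_z2_def z2_add.rep_eq)

lemma Rep_z2_minus [simp]: "Rep_z2 (x - y) n = (Rep_z2 x n - Rep_z2 y n) mod 2^n"
  by (simp add: minus_z2_def z2_sub.rep_eq)

lemma Rep_z2_times [simp]: "Rep_z2 (x * y) n = (Rep_z2 x n * Rep_z2 y n) mod 2^n"
  by (simp add: times_z2_def z2_mult.rep_eq)

lemma Rep_z2_uminus [simp]: "Rep_z2 (- x) n = (- Rep_z2 x n) mod 2^n"
  by (simp add: uminus_z2_def z2_sub.rep_eq z2_zero.rep_eq)

instance
proof
  fix a b c :: z2
  show "a + b + c = a + (b + c)"
    by (simp add: z2_eq_iff mod_add_left_eq mod_add_right_eq add.assoc)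
  show "a + b = b + a" by (simp add: z2_eq_iff add.commute)
  show "0 + a = a" by (simp add: z2_eq_iff)
  show "- a + a = 0" by (simp add: z2_eq_iff mod_add_left_eq)
  show "a - b = a + - b" by (simp add: z2_eq_iff mod_add_right_eq)
  show "a * b * c = a * (b * c)"
    by (simp add: z2_eq_iff mod_mult_left_eq mod_mult_right_eq mult.assoc)
  show "a * b = b * a" by (simp add: z2_eq_iff mult.commute)
  show "1 * a = a" by (simp add: z2_eq_iff mod_mult_left_eq)
  show "(a + b) * c = a * c + b * c"
    by (simp add: z2_eq_iff mod_mult_left_eq mod_add_eq distrib_right)
  have "Rep_z2 (0::z2) 1 \<noteq> Rep_z2 1 1" by simp
  then show "(0::z2) \<noteq> 1" by metis
qed

end

lemma z2_ops_eq: "x \<oplus> y = x + y" "x \<ominus> y = x - y" "x \<otimes> y = x * y" "z2_zero = 0"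
  by (simp_all add: plus_z2_def minus_z2_def times_z2_def zero_z2_def)

lemma Rep_z2_of_nat: "Rep_z2 (of_nat m) n = int m mod 2^n"
  by (induction m) (simp_all add: mod_add_right_eq add.commute)

lemma Rep_z2_numeral [simp]: "Rep_z2 (numeral m) n = numeral m mod 2^n"
  using Rep_z2_of_nat[of "numeral m" n] by simp

lemma Rep_z2_pow2: "Rep_z2 (2^k) n = 2^k mod 2^n"
  using Rep_z2_of_nat[of "2^k" n] by simp

lemma z2_pow2_dvd_iff: "(2::z2)^n dvd x \<longleftrightarrow> Rep_z2 x n = 0"
proof
  assume "2^n dvd x"
  then show "Rep_z2 x n = 0" by (auto simp: Rep_z2_pow2)
next
  assume x_n: "Rep_z2 x n = 0"
  define X where "X m = Rep_z2 x (m + n)" for m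
  \<comment> \<open>the residues of x / 2^n\<close>
  define q where "q m = X m div 2^n" for m
  have X_eq: "X m = 2^n * q m" for m
  proof -
    have "X m mod 2^n = 0" unfolding X_def using Rep_z2_mod_pow[of n "m + n" x] x_n by simp
    then show ?thesis unfolding q_def by (metis mult_div_mod_eq add_0_right)
  qed
  have q_coherent: "q \<in> {f. \<forall>m. 0 \<le> f m \<and> f m < 2^m \<and> f (Suc m) mod 2^m = f m}"
  proof (intro CollectI allI conjI)
    fix m
    have "0 \<le> 2^n * q m" "2^n * q m < 2^n * 2^m"
      using Rep_z2_nonneg Rep_z2_less[of x "m + n"] unfolding X_eq[symmetric] X_def
      by (simp_all add: power_add mult.commute)
    then show "0 \<le> q m" "q m < 2^m" by (simp_all add: zero_le_mult_iff)
    have "X m = X (Suc m) mod 2^(m + n)"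
      unfolding X_def using Rep_z2_Suc_mod[of x "m + n"] by simp
    also have "\<dots> = (2^n * q (Suc m)) mod (2^n * 2^m)"
      unfolding X_eq by (metis power_add mult.commute)
    also have "\<dots> = 2^n * (q (Suc m) mod 2^m)"
      by (rule mult_mod_right[symmetric])
    finally show "q (Suc m) mod 2^m = q m" unfolding X_eq by simp
  qed
  have "x = 2^n * Abs_z2 q"
  proof (subst z2_eq_iff, intro allI)
    fix m
    have "Rep_z2 (2^n * Abs_z2 q) m = (2^n mod 2^m * q m) mod 2^m"
      by (simp add: Rep_z2_pow2 Abs_z2_inverse[OF q_coherent])
    also have "\<dots> = X m mod 2^m" unfolding X_eq by (metis mod_mult_left_eq)
    also have "\<dots> = Rep_z2 x m" unfolding X_def by (simp add: Rep_z2_mod_pow)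
    finally show "Rep_z2 x m = Rep_z2 (2^n * Abs_z2 q) m" by simp
  qed
  then show "2^n dvd x" by (rule dvdI)
qed

lemma enat_le_ord2_iff: "enat n \<le> ord2 x \<longleftrightarrow> (2::z2)^n dvd x"
proof (cases "\<forall>m. Rep_z2 x m = 0")
  case True
  then show ?thesis by (simp add: ord2.rep_eq z2_pow2_dvd_iff)
next
  case False
  define l where "l = (LEAST m. Rep_z2 x (Suc m) \<noteq> 0)"
  have ord2_x: "ord2 x = enat l" using False by (simp add: ord2.rep_eq l_def)
  from False obtain m where "Rep_z2 x (Suc m) \<noteq> 0" by (metis Rep_z2_at_0 not0_implies_Suc)
  then have x_Suc_l: "Rep_z2 x (Suc l) \<noteq> 0" unfolding l_def by (rule LeastI)
  have below_l: "Rep_z2 x (Suc j) = 0" if "j < l" for j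
    using that not_less_Least unfolding l_def by blast
  have "n \<le> l \<longleftrightarrow> Rep_z2 x n = 0"
  proof
    assume "n \<le> l"
    then show "Rep_z2 x n = 0" using below_l by (cases n) auto
  next
    assume "Rep_z2 x n = 0"
    then show "n \<le> l" using x_Suc_l Rep_z2_mod_pow[of "Suc l" n x] by (metis mod_0 not_less_eq_eq)
  qed
  then show ?thesis by (simp add: ord2_x z2_pow2_dvd_iff)
qed

lemma ord2_eq_infinity_iff: "ord2 x = \<infinity> \<longleftrightarrow> x = 0"
  by (simp add: ord2.rep_eq z2_eq_iff)

lemma ord2_zero [simp]: "ord2 0 = \<infinity>"
  by (simp add: ord2_eq_infinity_iff)

lemma z2_even_or_odd: "\<exists>c. (x::z2) = 2 * c \<or> x = 1 + 2 * c"
proof (cases "Rep_z2 x 1 = 0")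
  case True
  then show ?thesis using z2_pow2_dvd_iff[of 1 x] by auto
next
  case False
  then have "Rep_z2 (x - 1) 1 = 0" using Rep_z2_nonneg[of x 1] Rep_z2_less[of x 1] by simp
  then obtain c where "x - 1 = 2 * c" using z2_pow2_dvd_iff[of 1 "x - 1"] by auto
  then show ?thesis by (metis add.commute diff_add_cancel)
qed

lemma z2_pow2_not_dvd_odd: "\<not> (2::z2)^(k + 1) dvd 2^k * (1 + 2 * a)"
proof -
  have "Rep_z2 (2^k * (1 + 2 * a)) (k + 1) = (2^k * Rep_z2 (1 + 2 * a) (k + 1)) mod (2^k * 2)"
    by (simp add: Rep_z2_pow2 mod_mult_left_eq)
  also have "\<dots> = 2^k * (Rep_z2 (1 + 2 * a) (k + 1) mod 2)"
    by (rule mult_mod_right[symmetric])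
  also have "Rep_z2 (1 + 2 * a) (k + 1) mod 2 = Rep_z2 (1 + 2 * a) 1"
    by (metis Rep_z2_mod_pow le_add2 power_one_right)
  also have "Rep_z2 (1 + 2 * a) 1 = 1"
    by simp
  finally have "Rep_z2 (2^k * (1 + 2 * a)) (k + 1) = 2^k * 1" .
  moreover have "(2::int)^k * 1 \<noteq> 0" by simp
  ultimately show ?thesis unfolding z2_pow2_dvd_iff by argo
qed

lemma ord2_eq_enat_iff: "ord2 x = enat k \<longleftrightarrow> (\<exists>a. x = 2^k * (1 + 2 * a))"
proof -
  have "ord2 x = enat k \<longleftrightarrow> enat k \<le> ord2 x \<and> \<not> enat (k + 1) \<le> ord2 x"
    by (cases "ord2 x") auto
  also have "\<dots> \<longleftrightarrow> 2^k dvd x \<and> \<not> 2^(k + 1) dvd x"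
    by (simp only: enat_le_ord2_iff)
  also have "\<dots> \<longleftrightarrow> (\<exists>a. x = 2^k * (1 + 2 * a))"
  proof
    assume "2^k dvd x \<and> \<not> 2^(k + 1) dvd x"
    then obtain u where u: "x = 2^k * u" "\<not> 2^(k + 1) dvd 2^k * u" by blast
    obtain a where a: "u = 2 * a \<or> u = 1 + 2 * a" using z2_even_or_odd by blast
    have "2^k * (2 * a) = 2^(k + 1) * a" by (simp add: mult_ac)
    with u(2) have "u \<noteq> 2 * a" by (metis dvd_triv_left)
    with a u(1) show "\<exists>a. x = 2^k * (1 + 2 * a)" by blast
  next
    assume "\<exists>a. x = 2^k * (1 + 2 * a)"
    then obtain a where "x = 2^k * (1 + 2 * a)" ..
    then show "2^k dvd x \<and> \<not> 2^(k + 1) dvd x" using z2_pow2_not_dvd_odd[of k a] by simp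
  qed
  finally show ?thesis .
qed

lemma ord2_mult: "ord2 (x * y) = ord2 x + ord2 y"
proof (cases "x = 0 \<or> y = 0")
  case False
  then obtain k l where k: "ord2 x = enat k" and l: "ord2 y = enat l"
    by (metis ord2_eq_infinity_iff enat.exhaust)
  then obtain a b where "x = 2^k * (1 + 2 * a)" "y = 2^l * (1 + 2 * b)"
    by (auto simp: ord2_eq_enat_iff)
  then have "x * y = 2^(k + l) * (1 + 2 * (a + b + 2 * a * b))"
    by (simp add: power_add algebra_simps)
  then have "ord2 (x * y) = enat (k + l)" unfolding ord2_eq_enat_iff by blast
  with k l show ?thesis by simp
qed auto

lemma ord2_uminus [simp]: "ord2 (- x) = ord2 x"
proof -
  have "ord2 (- 1) = 0"
    unfolding zero_enat_def ord2_eq_enat_iff by (rule exI[of _ "- 1"]) simp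
  then show ?thesis using ord2_mult[of "- 1" x] by simp
qed

lemma ord2_add_eq_left:
  assumes "ord2 x < ord2 y"
  shows "ord2 (x + y) = ord2 x"
proof -
  obtain k where k: "ord2 x = enat k" using assms by (cases "ord2 x") auto
  then obtain a where "x = 2^k * (1 + 2 * a)" by (auto simp: ord2_eq_enat_iff)
  moreover have "enat (Suc k) \<le> ord2 y" using assms k by (simp add: Suc_ile_eq)
  then have "2^(Suc k) dvd y" by (simp only: enat_le_ord2_iff)
  then obtain c where "y = 2^(Suc k) * c" by blast
  ultimately have "x + y = 2^k * (1 + 2 * (a + c))" by (simp add: algebra_simps)
  then have "ord2 (x + y) = enat k" unfolding ord2_eq_enat_iff by blast
  with k show ?thesis by simp
qed

lemma ord2_diff_eq_left:
  assumes "ord2 x < ord2 y"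
  shows "ord2 (x - y) = ord2 x"
  using ord2_add_eq_left[of x "- y"] assms by simp

lemma ord2_diff_eq_right:
  assumes "ord2 y < ord2 x"
  shows "ord2 (x - y) = ord2 y"
  using ord2_add_eq_left[of "- y" x] assms by simp

lemma ord2_square_eq_enat_iff: "ord2 (x * x) = enat (2 * k) \<longleftrightarrow> ord2 x = enat k"
  by (cases "ord2 x") (auto simp: ord2_mult)

lemma z2_pronic_even: "(2::z2) dvd a * a + a"
proof -
  obtain c where "a = 2 * c \<or> a = 1 + 2 * c" using z2_even_or_odd by blast
  then have "a * a + a = 2 * (2 * c * c + c) \<or> a * a + a = 2 * ((1 + 2 * c) * (1 + c))"
    by (auto simp: algebra_simps)
  then show ?thesis by (metis dvd_triv_left)
qed

text \<open>Odd squares are congruent mod 8.\<close>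
lemma ord2_square_diff_ge:
  assumes "ord2 x = enat k" and "ord2 y = enat k"
  shows "enat (2 * k + 3) \<le> ord2 (x * x - y * y)"
proof -
  obtain a b where x: "x = 2^k * (1 + 2 * a)" and y: "y = 2^k * (1 + 2 * b)"
    using assms by (auto simp: ord2_eq_enat_iff)
  obtain e f where e: "a * a + a = 2 * e" and f: "b * b + b = 2 * f"
    using z2_pronic_even by (meson dvdE)
  have "x * x - y * y = 2^k * 2^k * 4 * ((a * a + a) - (b * b + b))"
    unfolding x y by (simp add: algebra_simps)
  also have "\<dots> = 2^k * 2^k * 8 * (e - f)"
    unfolding e f by (simp add: algebra_simps)
  also have "(2::z2)^k * 2^k * 8 = 2^(2 * k + 3)"
    by (simp only: mult_2 power_add) simp
  finally have "2^(2 * k + 3) dvd x * x - y * y" by (rule dvdI)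
  then show ?thesis by (simp only: enat_le_ord2_iff)
qed

definition det2 :: "z2 \<times> z2 \<Rightarrow> z2 \<times> z2 \<Rightarrow> z2" where
  "det2 u v = fst u * snd v - snd u * fst v"

lemma det2_nonzero_exists:
  assumes "v \<noteq> (0, 0)"
  obtains x where "det2 v x \<noteq> 0"
proof (cases "snd v = 0")
  case True
  with assms have "det2 v (0, 1) \<noteq> 0" by (cases v) (simp add: det2_def)
  then show ?thesis by (rule that)
next
  case False
  then have "det2 v (1, 0) \<noteq> 0" by (simp add: det2_def)
  then show ?thesis by (rule that)
qed

lemma bil_eq:
  "bil a b c u v = a * fst u * fst v + b * (fst u * snd v + snd u * fst v) + c * snd u * snd v"
  by (simp add: bil_def z2_ops_eq)

lemma quadf_mult_quadf:
  "quadf a b c u * quadf a b c v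
     = bil a b c u v * bil a b c u v + det2 u v * det2 u v * gram_det a b c"
  unfolding quadf_def bil_eq det2_def gram_det_def z2_ops_eq by (simp add: algebra_simps)

lemma det2_mult_bil:
  "det2 z y * bil a b c z w = det2 w y * quadf a b c z + det2 z w * bil a b c z y"
  unfolding quadf_def bil_eq det2_def by (simp add: algebra_simps)

lemma isotropic_bil_square:
  assumes "quadf a b c v = 0"
  shows "bil a b c v x * bil a b c v x = - (det2 v x * det2 v x * gram_det a b c)"
  using quadf_mult_quadf[of a b c v x] assms by (simp add: eq_neg_iff_add_eq_0)

lemma isotropic_difference_of_squares:
  assumes "quadf a b c v = 0"
  shows "det2 v x * det2 v x * (quadf a b c z * quadf a b c w)
    = (det2 v x * bil a b c z w) * (det2 v x * bil a b c z w)
      - (det2 z w * bil a b c v x) * (det2 z w * bil a b c v x)"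
proof -
  have "det2 v x * det2 v x * (quadf a b c z * quadf a b c w)
    = (det2 v x * bil a b c z w) * (det2 v x * bil a b c z w)
      + (det2 z w * det2 z w) * (det2 v x * det2 v x * gram_det a b c)"
    unfolding quadf_mult_quadf by (simp add: algebra_simps)
  then show ?thesis using isotropic_bil_square[OF assms, of x] by (simp add: algebra_simps)
qed

lemma ord2_bil_basis_complement:
  assumes "ord2 (det2 z y) = 0" and "ord2 (gram_det a b c) = enat (2 * s)"
    and "enat (2 * s) < ord2 (quadf a b c z)"
  shows "ord2 (bil a b c z y) = enat s"
proof -
  have "ord2 (det2 z y * det2 z y * gram_det a b c) = enat (2 * s)"
    using assms(1,2) by (simp add: ord2_mult)
  moreover have "ord2 (quadf a b c z) \<le> ord2 (quadf a b c z * quadf a b c y)"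
    by (simp add: ord2_mult)
  with assms(3) have "enat (2 * s) < ord2 (quadf a b c z * quadf a b c y)"
    by (rule less_le_trans)
  moreover have "bil a b c z y * bil a b c z y
    = quadf a b c z * quadf a b c y - det2 z y * det2 z y * gram_det a b c"
    by (simp add: quadf_mult_quadf)
  ultimately have "ord2 (bil a b c z y * bil a b c z y) = enat (2 * s)"
    by (simp add: ord2_diff_eq_right)
  then show ?thesis by (simp only: ord2_square_eq_enat_iff)
qed

lemma ord2_det2_from_cramer:
  assumes "ord2 (det2 z y) = 0" and "ord2 (bil a b c z y) = enat s"
    and "ord2 (bil a b c z w) = enat t" and "enat t < ord2 (quadf a b c z)"
  shows "ord2 (det2 z w) + enat s = enat t"
proof -
  have "ord2 (det2 z y * bil a b c z w) = enat t"
    using assms(1,3) by (simp add: ord2_mult)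
  moreover have "ord2 (quadf a b c z) \<le> ord2 (det2 w y * quadf a b c z)"
    by (simp add: ord2_mult)
  with assms(4) have "enat t < ord2 (det2 w y * quadf a b c z)"
    by (rule less_le_trans)
  moreover have "det2 z w * bil a b c z y
    = det2 z y * bil a b c z w - det2 w y * quadf a b c z"
    using det2_mult_bil[of z y a b c w] by (simp add: eq_diff_eq add.commute)
  ultimately have "ord2 (det2 z w * bil a b c z y) = enat t"
    by (simp add: ord2_diff_eq_left)
  then show ?thesis using assms(2) by (simp add: ord2_mult)
qed

lemma ord2_bil_isotropic:
  assumes "quadf a b c v = 0" and "ord2 (gram_det a b c) = enat (2 * s)"
    and "ord2 (det2 v x) = enat m"
  shows "ord2 (bil a b c v x) = enat (m + s)"
proof -
  have "ord2 (bil a b c v x * bil a b c v x) = enat (2 * (m + s))"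
    using assms by (simp add: isotropic_bil_square ord2_mult)
  then show ?thesis by (simp only: ord2_square_eq_enat_iff)
qed

theorem lemma6p4:
  fixes a b c :: z2 and s t :: nat and z w :: "z2 \<times> z2"
  assumes "scale_is_Z2 a b c"
    and "hyperbolic_plane a b c"
    and "t > 2 * s"
    and "ord2 (gram_det a b c) = enat (2 * s)"
    and "primitive z"
    and "ord2 (quadf a b c z) = enat (t + 1)"
    and "ord2 (bil a b c z w) = enat t"
  shows "ord2 (quadf a b c w) \<ge> enat (t + 2)"
proof -
  let ?B = "bil a b c" and ?Q = "quadf a b c"
  obtain y where y: "ord2 (det2 z y) = 0"
    using assms(5) unfolding primitive_def det2_def z2_ops_eq by blast
  have "enat (2 * s) < ord2 (?Q z)" using assms(3,6) by simp
  then have B_zy: "ord2 (?B z y) = enat s" using ord2_bil_basis_complement[OF y assms(4)] by blast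
  have "enat t < ord2 (?Q z)" using assms(6) by simp
  then have "ord2 (det2 z w) + enat s = enat t"
    using ord2_det2_from_cramer[OF y B_zy assms(7)] by blast
  then obtain l where det_zw: "ord2 (det2 z w) = enat l" and "l + s = t"
    by (cases "ord2 (det2 z w)") auto
  obtain v where v: "v \<noteq> (0, 0)" "?Q v = 0"
    using assms(2) unfolding hyperbolic_plane_def z2_ops_eq by blast
  obtain x where "det2 v x \<noteq> 0" using det2_nonzero_exists[OF v(1)] .
  then obtain m where m: "ord2 (det2 v x) = enat m"
    by (metis ord2_eq_infinity_iff enat.exhaust)
  have "ord2 (det2 v x * ?B z w) = enat (m + t)" using m assms(7) by (simp add: ord2_mult)
  moreover have "ord2 (det2 z w * ?B v x) = enat (m + t)"
    using det_zw \<open>l + s = t\<close> ord2_bil_isotropic[OF v(2) assms(4) m] by (simp add: ord2_mult)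
  ultimately have "enat (2 * (m + t) + 3) \<le> ord2 (det2 v x * det2 v x * (?Q z * ?Q w))"
    unfolding isotropic_difference_of_squares[OF v(2)] by (rule ord2_square_diff_ge)
  also have "\<dots> = enat m + enat m + (enat (t + 1) + ord2 (?Q w))"
    by (simp only: ord2_mult m assms(6))
  finally show ?thesis by (cases "ord2 (?Q w)") auto
qed

end
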